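(* Let $\kappa$ be a nonzero real constant and $\gamma\in\{1,-1\}$. Let $W(\xi,\eta,\mu)=\sum_{n\ge1}W^{(n)}(\xi,\eta)\,\mu^{-n}$ be the off-diagonal $2\times2$ matrix series appearing in the large-spectral-parameter decomposition of the fundamental solution described in the context, and define the generating function \[ \mathbb Y(\xi,\eta,\lambda;\mu)=\frac{\gamma\kappa}{2i(\lambda-\mu)}\,(\mathbb 1+W(\xi,\eta,\mu))\,\sigma_3\,(\mathbb 1+W(\xi,\eta,\mu))^{-1}, \] with matrices $\mathbb Y^{(n)}(\xi,\eta,\lambda)$, $n\ge0$, defined by the large-$\mu$ expansion $\mathbb Y(\xi,\eta,\lambda;\mu)=\kappa\sum_{n=1}^\infty \mathbb Y^{(n-1)}(\xi,\eta,\lambda)\,\mu^{-n}$. Then \[ \mathbb Y^{(0)}(\xi,\eta,\lambda)=\frac{i\gamma}{2}\sigma_3, \] and for all $n\ge1$, \[ \mathbb Y^{(n)}(\xi,\eta,\lambda)=\lambda\,\mathbb Y^{(n-1)}(\xi,\eta,\lambda)+i\gamma\,\sigma_3\sum_{j=1}^n(-1)^j\sum_{\substack{m_1+\dots+m_j=n\\ m_1,\dots,m_j\ge1}}W^{(m_1)}\cdots W^{(m_j)}, \] where the inner sum runs over all ordered decompositions of $n$ into $j$ positive integers.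
   Context: Setting: $\mathbb X(\xi,\eta,\lambda)$ is a $2\times2$ matrix that is a polynomial of degree $N$ in the spectral parameter $\lambda$, with $\mathrm{Tr}\,\mathbb X=0$ and $\overline{\mathbb X(\xi,\eta,\bar\lambda)}=\sigma\,\mathbb X(\xi,\eta,\lambda)\,\sigma$, where $\sigma=\sigma_1$ if $\kappa>0$ and $\sigma=\sigma_2$ if $\kappa<0$; $\sigma_1,\sigma_2,\sigma_3$ are the Pauli matrices. Periodic boundary conditions are imposed in $\xi\in[-\Lambda,\Lambda]$. Let $\mathbb T(\xi,\zeta,\lambda)$ be the fundamental solution of $\partial_\xi\Psi=\mathbb X\Psi$ normalized by $\mathbb T(\xi,\xi,\lambda)=\mathbb 1$. For large $\lambda$ it is written as $\mathbb T(\xi,\zeta,\lambda)=(\mathbb 1+W(\xi,\lambda))e^{Z(\xi,\zeta,\lambda)}(\mathbb 1+W(\zeta,\lambda))^{-1}$ with $W$ off-diagonal, $W(\xi,\lambda)=\sum_{n\ge1}W^{(n)}(\xi)\lambda^{-n}$, and $Z$ diagonal; the coefficients $W^{(n)}$ (which also depend on the second variable $\eta$) are determined by the matrix Riccati equation $W_\xi=\mathbb X_dW-W\mathbb X_d+\mathbb X_o-W\mathbb X_oW$, where $\mathbb X_d$, $\mathbb X_o$ are the diagonal and off-diagonal parts of $\mathbb X$. Expansions in $\mu$ are understood as formal large-$\mu$ expansions. *)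

theory Defs
  imports "HOL-Analysis.Analysis" "HOL-Computational_Algebra.Formal_Power_Series"
begin

text \<open>2x2 complex matrices are complex^2^2 (rows indexed by 1,2).
 Formal series in the large parameter mu are formal power series in x = 1/mu.\<close>

definition sigma3 :: "complex^2^2" where
  "sigma3 = vector [vector [1, 0], vector [0, -1]]"

definition off_diagonal :: "complex^2^2 \<Rightarrow> bool" where
  "off_diagonal A \<longleftrightarrow> (\<forall>i. A $ i $ i = 0)"

definition cscale :: "complex \<Rightarrow> complex^2^2 \<Rightarrow> complex^2^2" where
  "cscale c A = (\<chi> i j. c * A $ i $ j)"

definition lift_mat :: "complex^2^2 \<Rightarrow> complex fps^2^2" where
  "lift_mat A = (\<chi> i j. fps_const (A $ i $ j))"

text \<open>W(mu) = sum_{n>=1} W^(n) mu^(-n), as matrix of fps in x = 1/mu (coefficient W 0 is ignored)\<close>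
definition W_ser :: "(nat \<Rightarrow> complex^2^2) \<Rightarrow> complex fps^2^2" where
  "W_ser W = (\<chi> i j. Abs_fps (\<lambda>n. if n = 0 then 0 else W n $ i $ j))"

text \<open>Generating function Y = gamma kappa / (2 i (lambda - mu)) (1+W) sigma3 (1+W)^{-1},
  using 1/(lambda - mu) = - x / (1 - lambda x) with x = 1/mu.\<close>
definition Y_gen :: "real \<Rightarrow> real \<Rightarrow> complex \<Rightarrow> (nat \<Rightarrow> complex^2^2) \<Rightarrow> complex fps^2^2" where
  "Y_gen \<kappa> \<gamma> lam W =
     (let M = (mat 1 + W_ser W) ** lift_mat sigma3 ** matrix_inv (mat 1 + W_ser W)
      in (\<chi> i j. fps_const (complex_of_real (\<gamma> * \<kappa>) / (2 * \<i>))
                 * (- fps_X * inverse (1 - fps_const lam * fps_X)) * M $ i $ j))"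

text \<open>Y^(n): Y = kappa * sum_{n>=1} Y^(n-1) mu^(-n)\<close>
definition Y_coef :: "real \<Rightarrow> real \<Rightarrow> complex \<Rightarrow> (nat \<Rightarrow> complex^2^2) \<Rightarrow> nat \<Rightarrow> complex^2^2" where
  "Y_coef \<kappa> \<gamma> lam W n =
     (\<chi> i j. fps_nth (Y_gen \<kappa> \<gamma> lam W $ i $ j) (Suc n) / complex_of_real \<kappa>)"

definition compositions :: "nat \<Rightarrow> nat \<Rightarrow> nat list set" where
  "compositions n j = {ms. length ms = j \<and> (\<forall>m\<in>set ms. 1 \<le> m) \<and> sum_list ms = n}"

definition Wprod :: "(nat \<Rightarrow> complex^2^2) \<Rightarrow> nat list \<Rightarrow> complex^2^2" where
  "Wprod W ms = foldr (\<lambda>m A. W m ** A) ms (mat 1)"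

end

theory Submission
  imports Defs
begin

text \<open>Since \<open>W\<close> is off-diagonal it anticommutes with \<open>\<sigma>\<^sub>3\<close>, so
  \<open>(1 + W) \<sigma>\<^sub>3 (1 + W)\<^sup>-\<^sup>1 = \<sigma>\<^sub>3 (1 - W) (1 + W)\<^sup>-\<^sup>1 = \<sigma>\<^sub>3 (2 (1 + W)\<^sup>-\<^sup>1 - 1)\<close>.
  The inverse is the Neumann series \<open>\<Sum>\<^sub>j (-W)\<^sup>j\<close>, whose \<open>\<mu>\<^sup>-\<^sup>n\<close> coefficient is the alternating
  sum over compositions of \<open>n\<close>; it is characterised by the recursion
  \<open>Q\<^sub>n + \<Sum>\<^sub>m W\<^sup>(\<^sup>m\<^sup>) Q\<^sub>n\<^sub>-\<^sub>m = 0\<close> obtained by splitting off the first part of a composition.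
  Finally \<open>1/(\<lambda> - \<mu>) = -\<mu>\<^sup>-\<^sup>1 \<Sum>\<^sub>k (\<lambda>/\<mu>)\<^sup>k\<close>, and multiplying by this geometric series
  produces the term \<open>\<lambda> Y\<^sup>(\<^sup>n\<^sup>-\<^sup>1\<^sup>)\<close> of the recursion.\<close>

lemma matrix_mul_sum_right:
  "(A::'a::comm_semiring_1^'n^'m) ** sum f S = (\<Sum>x\<in>S. A ** f x)"
  by (cases "finite S", induction S rule: finite_induct) (auto simp: matrix_add_ldistrib)

lemma matrix_add_rdistrib: "((A::'a::comm_semiring_1^'n^'m) + B) ** C = A ** C + B ** C"
  by (simp add: vec_eq_iff matrix_matrix_mult_def sum.distrib algebra_simps)

lemma matrix_diff_rdistrib: "((A::'a::comm_ring_1^'n^'m) - B) ** C = A ** C - B ** C"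
  by (simp add: vec_eq_iff matrix_matrix_mult_def sum_subtractf algebra_simps)

lemma matrix_inv_eq:
  fixes A :: "'a::semiring_1^'n^'m" and B :: "'a^'m^'n"
  assumes "A ** B = mat 1" and "B ** A = mat 1"
  shows "matrix_inv A = B"
  unfolding matrix_inv_def
proof (rule some_equality)
  fix C assume "A ** C = mat 1 \<and> C ** A = mat 1"
  then show "C = B"
    by (metis assms(1) matrix_mul_assoc matrix_mul_lid matrix_mul_rid)
qed (use assms in simp)

lemma matrix_right_inverse_imp_left_inverse_2:
  fixes A B :: "'a::comm_ring_1^2^2"
  assumes AB: "A ** B = mat 1"
  shows "B ** A = mat 1"
proof -
  \<comment> \<open>\<open>C\<close> is the adjugate of \<open>A\<close>, and \<open>det A\<close> is a unit since \<open>det A * det B = 1\<close>.\<close>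
  define C :: "'a^2^2" where "C = vector [vector [A$2$2, - A$1$2], vector [- A$2$1, A$1$1]]"
  have mat_mult: "mat c ** X = (\<chi> i j. c * X $ i $ j)" for c and X :: "'a^2^2"
    by (simp add: vec_eq_iff forall_2 matrix_matrix_mult_def sum_2 mat_def)
  have CA: "C ** A = mat (det A)"
    by (simp add: C_def det_2 vec_eq_iff forall_2 matrix_matrix_mult_def sum_2 mat_def algebra_simps)
  have det_BA: "mat (det B) ** mat (det A) = (mat 1 :: 'a^2^2)"
  proof -
    have "det A * det B = 1" using det_mul[of A B] AB by simp
    then show ?thesis unfolding mat_mult by (simp add: mat_def vec_eq_iff mult.commute)
  qed
  have "C = mat (det A) ** B"
    by (metis AB CA matrix_mul_assoc matrix_mul_rid)
  then have "mat (det B) ** C ** A = B ** A"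
    by (simp add: matrix_mul_assoc det_BA)
  moreover have "mat (det B) ** C ** A = mat 1"
    by (simp add: CA det_BA flip: matrix_mul_assoc)
  ultimately show ?thesis by simp
qed

lemma cscale_sum: "cscale c (sum f S) = (\<Sum>x\<in>S. cscale c (f x))"
  by (simp add: cscale_def vec_eq_iff sum_component sum_distrib_left)

lemma cscale_0_right [simp]: "cscale c 0 = 0"
  by (simp add: cscale_def vec_eq_iff)

lemma cscale_minus: "cscale (- c) A = - cscale c A"
  by (simp add: cscale_def vec_eq_iff)

lemma matrix_mul_cscale_right: "A ** cscale c B = cscale c (A ** B)"
  by (simp add: cscale_def vec_eq_iff matrix_matrix_mult_def sum_distrib_left algebra_simps)

lemma length_le_sum_list: "\<forall>m\<in>set ms. (1::nat) \<le> m \<Longrightarrow> length ms \<le> sum_list ms"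
  by (induction ms) auto

lemma finite_compositions: "finite (compositions n j)"
proof (rule finite_subset)
  show "compositions n j \<subseteq> {ms. set ms \<subseteq> {0..n} \<and> length ms = j}"
    by (auto simp: compositions_def member_le_sum_list)
qed (simp add: finite_lists_length_eq)

lemma compositions_0_0: "compositions 0 0 = {[]}"
  by (auto simp: compositions_def)

lemma compositions_0_right: "n > 0 \<Longrightarrow> compositions n 0 = {}"
  by (auto simp: compositions_def)

lemma compositions_eq_empty: "j > n \<Longrightarrow> compositions n j = {}"
  using length_le_sum_list by (fastforce simp: compositions_def)

lemma compositions_Suc:
  "compositions n (Suc j) = (\<Union>m\<in>{1..n}. (#) m ` compositions (n - m) j)"
proof (rule set_eqI, rule iffI)
  fix ms assume "ms \<in> compositions n (Suc j)"
  then obtain m r where "ms = m # r" "1 \<le> m" "m + sum_list r = n" "r \<in> compositions (n - m) j"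
    unfolding compositions_def by (cases ms) auto
  then show "ms \<in> (\<Union>m\<in>{1..n}. (#) m ` compositions (n - m) j)" by auto
qed (auto simp: compositions_def)

definition composition_sum :: "(nat \<Rightarrow> 'a::comm_semiring_1^'n^'n) \<Rightarrow> nat \<Rightarrow> nat \<Rightarrow> 'a^'n^'n" where
  "composition_sum W n j = (\<Sum>ms\<in>compositions n j. foldr (\<lambda>m A. W m ** A) ms (mat 1))"

lemma composition_sum_Suc:
  "composition_sum W n (Suc j) = (\<Sum>m=1..n. W m ** composition_sum W (n - m) j)"
proof -
  have "composition_sum W n (Suc j)
      = (\<Sum>m=1..n. \<Sum>ms\<in>(#) m ` compositions (n - m) j. foldr (\<lambda>m A. W m ** A) ms (mat 1))"
    unfolding composition_sum_def compositions_Suc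
    by (rule sum.UNION_disjoint) (auto simp: finite_compositions)
  also have "\<dots> = (\<Sum>m=1..n. W m ** composition_sum W (n - m) j)"
    by (auto simp: sum.reindex composition_sum_def matrix_mul_sum_right intro!: sum.cong)
  finally show ?thesis .
qed

lemma composition_sum_eq_0: "j > n \<or> (n > 0 \<and> j = 0) \<Longrightarrow> composition_sum W n j = 0"
  by (auto simp: composition_sum_def compositions_eq_empty compositions_0_right)

definition neumann_coeff :: "(nat \<Rightarrow> complex^2^2) \<Rightarrow> nat \<Rightarrow> complex^2^2" where
  "neumann_coeff W n = (\<Sum>j=0..n. cscale ((-1)^j) (composition_sum W n j))"

lemma neumann_coeff_0: "neumann_coeff W 0 = mat 1"
  by (simp add: neumann_coeff_def composition_sum_def compositions_0_0 cscale_def mat_def vec_eq_iff)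

lemma neumann_coeff_eq:
  "n \<ge> 1 \<Longrightarrow> neumann_coeff W n = (\<Sum>j=1..n. cscale ((-1) ^ j) (\<Sum>ms\<in>compositions n j. Wprod W ms))"
  unfolding neumann_coeff_def
  by (subst sum.atLeast_Suc_atMost) (auto simp: composition_sum_def compositions_0_right Wprod_def)

lemma neumann_coeff_extend:
  "n \<le> N \<Longrightarrow> (\<Sum>j=0..N. cscale ((-1)^j) (composition_sum W n j)) = neumann_coeff W n"
  unfolding neumann_coeff_def
  by (rule sum.mono_neutral_right) (auto simp: composition_sum_eq_0 cscale_def vec_eq_iff)

lemma neumann_coeff_rec:
  assumes "n \<ge> 1"
  shows "neumann_coeff W n + (\<Sum>m=1..n. W m ** neumann_coeff W (n - m)) = 0"
proof -
  obtain p where n: "n = Suc p" using assms by (cases n) auto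
  let ?f = "\<lambda>j. cscale ((-1)^j) (composition_sum W n j)"
  have "neumann_coeff W n = ?f 0 + (\<Sum>j=Suc 0..Suc p. ?f j)"
    unfolding neumann_coeff_def n by (rule sum.atLeast_Suc_atMost) simp
  also have "\<dots> = (\<Sum>j=0..p. ?f (Suc j))"
    using n by (simp only: sum.shift_bounds_cl_Suc_ivl) (simp add: composition_sum_eq_0)
  also have "\<dots> = - (\<Sum>j=0..p. \<Sum>m=1..n. W m ** cscale ((-1)^j) (composition_sum W (n - m) j))"
    by (simp add: composition_sum_Suc cscale_sum cscale_minus matrix_mul_cscale_right sum_negf)
  also have "\<dots> = - (\<Sum>m=1..n. W m ** (\<Sum>j=0..p. cscale ((-1)^j) (composition_sum W (n - m) j)))"
    by (subst sum.swap) (simp add: matrix_mul_sum_right)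
  also have "\<dots> = - (\<Sum>m=1..n. W m ** neumann_coeff W (n - m))"
    using n by (intro arg_cong[where f=uminus] sum.cong refl, subst neumann_coeff_extend) auto
  finally show ?thesis by simp
qed

definition mat_coeff :: "'a::zero fps^'n^'m \<Rightarrow> nat \<Rightarrow> 'a^'n^'m" where
  "mat_coeff F n = (\<chi> i j. fps_nth (F $ i $ j) n)"

lemma mat_coeff_inject: "(\<And>n. mat_coeff F n = mat_coeff G n) \<Longrightarrow> F = G"
  by (simp add: mat_coeff_def vec_eq_iff fps_eq_iff)

lemma mat_coeff_mult:
  "mat_coeff (F ** G) n = (\<Sum>t=0..n. mat_coeff F t ** mat_coeff G (n - t))"
proof -
  have "(\<Sum>k\<in>UNIV. \<Sum>t=0..n. fps_nth (F$i$k) t * fps_nth (G$k$j) (n - t))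
      = (\<Sum>t=0..n. \<Sum>k\<in>UNIV. fps_nth (F$i$k) t * fps_nth (G$k$j) (n - t))" for i j
    by (rule sum.swap)
  then show ?thesis
    by (simp add: mat_coeff_def vec_eq_iff matrix_matrix_mult_def fps_sum_nth fps_mult_nth)
qed

lemma mat_coeff_add: "mat_coeff (F + G) n = mat_coeff F n + mat_coeff G n"
  by (simp add: mat_coeff_def vec_eq_iff)

lemma mat_coeff_diff: "mat_coeff (F - G) n = mat_coeff F n - mat_coeff G n"
  by (simp add: mat_coeff_def vec_eq_iff)

lemma mat_coeff_mat_1: "mat_coeff (mat 1) n = (if n = 0 then mat 1 else 0)"
  by (simp add: mat_coeff_def vec_eq_iff mat_def)

lemma mat_coeff_W_ser: "mat_coeff (W_ser W) n = (if n = 0 then 0 else W n)"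
  by (simp add: mat_coeff_def vec_eq_iff W_ser_def)

lemma mat_coeff_lift_mat_mult: "mat_coeff (lift_mat A ** F) n = A ** mat_coeff F n"
  by (simp add: mat_coeff_def vec_eq_iff matrix_matrix_mult_def lift_mat_def fps_sum_nth)

definition neumann_ser :: "(nat \<Rightarrow> complex^2^2) \<Rightarrow> complex fps^2^2" where
  "neumann_ser W = (\<chi> i j. Abs_fps (\<lambda>n. neumann_coeff W n $ i $ j))"

lemma mat_coeff_neumann_ser: "mat_coeff (neumann_ser W) n = neumann_coeff W n"
  by (simp add: neumann_ser_def mat_coeff_def vec_eq_iff)

lemma neumann_ser_right_inverse: "(mat 1 + W_ser W) ** neumann_ser W = mat 1"
proof (rule mat_coeff_inject)
  fix n
  have "mat_coeff ((mat 1 + W_ser W) ** neumann_ser W) n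
      = neumann_coeff W n + (\<Sum>t=1..n. W t ** neumann_coeff W (n - t))"
    unfolding mat_coeff_mult
    by (subst sum.atLeast_Suc_atMost)
       (auto simp: mat_coeff_add mat_coeff_mat_1 mat_coeff_W_ser mat_coeff_neumann_ser intro!: sum.cong)
  then show "mat_coeff ((mat 1 + W_ser W) ** neumann_ser W) n = mat_coeff (mat 1) n"
    using neumann_coeff_rec[of n W] by (cases "n = 0") (simp_all add: neumann_coeff_0 mat_coeff_mat_1)
qed

lemma matrix_inv_one_plus_W_ser: "matrix_inv (mat 1 + W_ser W) = neumann_ser W"
  using neumann_ser_right_inverse matrix_right_inverse_imp_left_inverse_2
  by (blast intro: matrix_inv_eq)

lemma one_plus_W_ser_mult_sigma3:
  assumes "\<And>n. 1 \<le> n \<Longrightarrow> off_diagonal (W n)"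
  shows "(mat 1 + W_ser W) ** lift_mat sigma3 = lift_mat sigma3 ** (mat 1 - W_ser W)"
proof -
  have diag: "W_ser W $ i $ i = 0" for i
    using assms by (auto simp: W_ser_def fps_eq_iff off_diagonal_def)
  have minus_one: "fps_const (-1::complex) = -1"
    by (simp add: fps_eq_iff)
  have sigma3: "sigma3$1$1 = 1" "sigma3$1$2 = 0" "sigma3$2$1 = 0" "sigma3$2$2 = -1"
    by (simp_all add: sigma3_def)
  show ?thesis
    using diag[of 1] diag[of 2]
    by (simp add: sigma3 minus_one vec_eq_iff forall_2 matrix_matrix_mult_def sum_2 lift_mat_def
        mat_def del: fps_const_neg)
qed

definition sigma3_conjugate :: "(nat \<Rightarrow> complex^2^2) \<Rightarrow> complex fps^2^2" where
  "sigma3_conjugate W = (mat 1 + W_ser W) ** lift_mat sigma3 ** matrix_inv (mat 1 + W_ser W)"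

lemma mat_coeff_sigma3_conjugate:
  assumes "\<And>n. 1 \<le> n \<Longrightarrow> off_diagonal (W n)"
  shows "mat_coeff (sigma3_conjugate W) n
       = sigma3 ** (neumann_coeff W n + neumann_coeff W n - (if n = 0 then mat 1 else 0))"
proof -
  let ?N = "neumann_ser W"
  have "?N + W_ser W ** ?N = mat 1"
    using neumann_ser_right_inverse[of W] by (simp add: matrix_add_rdistrib)
  then have "W_ser W ** ?N = mat 1 - ?N"
    by (metis add_diff_cancel_left')
  then have "(mat 1 - W_ser W) ** ?N = ?N + ?N - mat 1"
    by (simp add: matrix_diff_rdistrib)
  then have "sigma3_conjugate W = lift_mat sigma3 ** (?N + ?N - mat 1)"
    unfolding sigma3_conjugate_def
    by (simp only: one_plus_W_ser_mult_sigma3[OF assms] matrix_inv_one_plus_W_ser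
        flip: matrix_mul_assoc)
  then show ?thesis
    by (simp only: mat_coeff_lift_mat_mult mat_coeff_add mat_coeff_diff mat_coeff_mat_1 mat_coeff_neumann_ser)
qed

lemma fps_nth_geometric_mult_0:
  "fps_nth (inverse (1 - fps_const lam * fps_X) * f) 0 = fps_nth (f::'a::field fps) 0"
  by (simp add: fps_mult_nth)

lemma fps_nth_geometric_mult_Suc:
  fixes f :: "'a::field fps"
  shows "fps_nth (inverse (1 - fps_const lam * fps_X) * f) (Suc n)
       = fps_nth f (Suc n) + lam * fps_nth (inverse (1 - fps_const lam * fps_X) * f) n"
proof -
  let ?G = "inverse (1 - fps_const lam * fps_X)"
  have "(1 - fps_const lam * fps_X) * ?G = 1"
    by (rule inverse_mult_eq_1') simp
  then have "?G = 1 + fps_const lam * fps_X * ?G"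
    by (simp add: algebra_simps)
  then have "?G * f = (1 + fps_const lam * fps_X * ?G) * f"
    by (rule arg_cong)
  also have "\<dots> = f + fps_const lam * (fps_X * (?G * f))"
    by (simp only: distrib_right mult_1_left mult.assoc)
  finally have expand: "?G * f = f + fps_const lam * (fps_X * (?G * f))" .
  show ?thesis
    by (subst expand) simp
qed

definition geometric_coeff :: "complex \<Rightarrow> complex fps^2^2 \<Rightarrow> nat \<Rightarrow> complex^2^2" where
  "geometric_coeff lam F n = (\<chi> i j. fps_nth (inverse (1 - fps_const lam * fps_X) * F $ i $ j) n)"

lemma geometric_coeff_0: "geometric_coeff lam F 0 = mat_coeff F 0"
  by (simp add: geometric_coeff_def mat_coeff_def fps_nth_geometric_mult_0)

lemma geometric_coeff_Suc:
  "geometric_coeff lam F (Suc n) = mat_coeff F (Suc n) + cscale lam (geometric_coeff lam F n)"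
  by (simp add: geometric_coeff_def mat_coeff_def cscale_def vec_eq_iff fps_nth_geometric_mult_Suc)

text \<open>The factor \<open>-x\<close> of \<open>1/(\<lambda> - \<mu>) = -x / (1 - \<lambda> x)\<close> shifts the coefficients by one,
  which cancels the index shift in \<open>Y_coef\<close>.\<close>

lemma Y_coef_eq_geometric_coeff:
  fixes W :: "nat \<Rightarrow> complex^2^2"
  assumes "\<kappa> \<noteq> 0"
  shows "Y_coef \<kappa> \<gamma> lam W n = cscale (\<i> * \<gamma> / 2) (geometric_coeff lam (sigma3_conjugate W) n)"
proof -
  let ?c = "complex_of_real (\<gamma> * \<kappa>) / (2 * \<i>)"
  let ?M = "sigma3_conjugate W"
  have "Y_gen \<kappa> \<gamma> lam W $ i $ j
      = - (fps_const ?c * (fps_X * (inverse (1 - fps_const lam * fps_X) * ?M $ i $ j)))" for i j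
    unfolding Y_gen_def Let_def sigma3_conjugate_def by (simp add: algebra_simps)
  moreover have "- ?c * x / complex_of_real \<kappa> = \<i> * \<gamma> / 2 * x" for x
    using assms by (simp add: field_simps)
  ultimately show ?thesis
    by (simp add: Y_coef_def geometric_coeff_def cscale_def vec_eq_iff)
qed

lemma Y_coef_0:
  fixes W :: "nat \<Rightarrow> complex^2^2"
  assumes "\<kappa> \<noteq> 0" and "\<And>n. 1 \<le> n \<Longrightarrow> off_diagonal (W n)"
  shows "Y_coef \<kappa> \<gamma> lam W 0 = cscale (\<i> * \<gamma> / 2) sigma3"
  using mat_coeff_sigma3_conjugate[OF assms(2), where n=0]
  by (simp add: Y_coef_eq_geometric_coeff[OF assms(1)] geometric_coeff_0 neumann_coeff_0)

lemma Y_coef_Suc: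
  fixes W :: "nat \<Rightarrow> complex^2^2"
  assumes "\<kappa> \<noteq> 0" and "\<And>n. 1 \<le> n \<Longrightarrow> off_diagonal (W n)"
  shows "Y_coef \<kappa> \<gamma> lam W (Suc n)
       = cscale lam (Y_coef \<kappa> \<gamma> lam W n) + cscale (\<i> * \<gamma>) (sigma3 ** neumann_coeff W (Suc n))"
proof -
  have "mat_coeff (sigma3_conjugate W) (Suc n) = sigma3 ** neumann_coeff W (Suc n) + sigma3 ** neumann_coeff W (Suc n)"
    using mat_coeff_sigma3_conjugate[OF assms(2), where n="Suc n"]
    by (simp only: nat.distinct if_False diff_zero matrix_add_ldistrib)
  then show ?thesis
    by (simp add: Y_coef_eq_geometric_coeff[OF assms(1)] geometric_coeff_Suc cscale_def vec_eq_iff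
        algebra_simps)
qed

theorem mainTheorem2:
  fixes \<kappa> \<gamma> :: real and W :: "real \<Rightarrow> real \<Rightarrow> nat \<Rightarrow> complex^2^2"
  assumes "\<kappa> \<noteq> 0"
    and "\<gamma> = 1 \<or> \<gamma> = -1"
    and "\<And>\<xi> \<eta> n. 1 \<le> n \<Longrightarrow> off_diagonal (W \<xi> \<eta> n)"
  shows "\<forall>\<xi> \<eta> (lam::complex).
      Y_coef \<kappa> \<gamma> lam (W \<xi> \<eta>) 0 = cscale (\<i> * complex_of_real \<gamma> / 2) sigma3
    \<and> (\<forall>n\<ge>1. Y_coef \<kappa> \<gamma> lam (W \<xi> \<eta>) n
          = cscale lam (Y_coef \<kappa> \<gamma> lam (W \<xi> \<eta>) (n - 1))
            + cscale (\<i> * complex_of_real \<gamma>)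
                (sigma3 ** (\<Sum>j = 1..n. cscale ((-1) ^ j)
                   (\<Sum>ms\<in>compositions n j. Wprod (W \<xi> \<eta>) ms))))"
proof (intro allI conjI impI)
  fix \<xi> \<eta> :: real and lam :: complex and n :: nat
  have offd: "\<And>n. 1 \<le> n \<Longrightarrow> off_diagonal (W \<xi> \<eta> n)"
    using assms(3) .
  show "Y_coef \<kappa> \<gamma> lam (W \<xi> \<eta>) 0 = cscale (\<i> * complex_of_real \<gamma> / 2) sigma3"
    by (rule Y_coef_0[OF assms(1) offd])
  assume "n \<ge> 1"
  then obtain p where n: "n = Suc p"
    by (cases n) auto
  show "Y_coef \<kappa> \<gamma> lam (W \<xi> \<eta>) n
          = cscale lam (Y_coef \<kappa> \<gamma> lam (W \<xi> \<eta>) (n - 1))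
            + cscale (\<i> * complex_of_real \<gamma>)
                (sigma3 ** (\<Sum>j = 1..n. cscale ((-1) ^ j)
                   (\<Sum>ms\<in>compositions n j. Wprod (W \<xi> \<eta>) ms)))"
    unfolding neumann_coeff_eq[OF \<open>n \<ge> 1\<close>, symmetric] unfolding n diff_Suc_1
    by (rule Y_coef_Suc[OF assms(1) offd])
qed

end
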